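(* Let $q>1$ be a fixed integer and $c>0$. There exists a constant $C>0$ (depending only on $q$ and $c$) such that for all $n\in\mathbb{N}$ and $p\in(0,1)$ with $np\ge c$ (i.e. $p^{-1}\lesssim n$), a random variable $B\sim\mathrm{Bin}(n,p)$ satisfies $$\mathbb{E}\Big[\mathbb{I}\{B>0\}\Big(\frac1B-\frac1{np}\Big)^q\Big]\le C\,(np)^{-3q/2}.$$ *)

theory Defs
  imports "HOL-Probability.Probability"
begin

end

theory Submission
  imports Defs
begin

(* Write mu = n p and s = sqrt mu. For k >= mu / 2 one has |1/k - 1/mu| <= 2 |k - mu| / mu^2,
   while for 1 <= k < mu / 2 the difference lies in [0, 1] and |k - mu| >= mu / 2. In both cases
   (1/k - 1/mu)^q <= 2^q s^(-3q) + O(s^(-7q)) (k - mu)^(4q), so it suffices to know that the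
   central moments of Bin(n, p) satisfy E (B - np)^j = O((1 + np)^(j div 2)). This follows by
   induction on n from Bin(n + 1, p) = Bin(n, p) + Bernoulli(p): in the binomial expansion of the
   increment of the j-th moment the terms of order j and j - 1 cancel, and each remaining term is a
   moment of order at most j - 2 times a factor O(p). Summing n increments gives
   O(np (1 + np)^(j div 2 - 1)). *)

lemma abs_le_abs_0_add_increments:
  fixes f :: "nat \<Rightarrow> 'a :: linordered_idom"
  assumes "\<And>m. m < n \<Longrightarrow> \<bar>f (Suc m) - f m\<bar> \<le> b"
  shows "\<bar>f n\<bar> \<le> \<bar>f 0\<bar> + of_nat n * b"
proof -
  have "\<bar>f n\<bar> \<le> \<bar>f 0\<bar> + \<bar>\<Sum>m<n. f (Suc m) - f m\<bar>"
    unfolding sum_lessThan_telescope[of f] using abs_triangle_ineq2[of "f n" "f 0"] by linarith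
  also have "\<dots> \<le> \<bar>f 0\<bar> + of_nat n * b"
    using sum_bounded_above[of "{..<n}", OF assms]
    by (intro add_left_mono order.trans[OF sum_abs]) auto
  finally show ?thesis .
qed

lemma mult_power_pred_le:
  fixes t :: "'a :: linordered_semidom"
  assumes "0 \<le> t" "0 < d"
  shows "t * (1 + t) ^ (d - 1) \<le> (1 + t) ^ d"
  using assms by (cases d) (auto intro: mult_right_mono)

lemma power_le_add_power_div:
  fixes d s :: real
  assumes "0 \<le> d" "0 < s"
  shows "d ^ a \<le> s ^ a + d ^ (a + b) / s ^ b"
proof (cases "d \<le> s")
  case True
  then have "d ^ a \<le> s ^ a" using assms by (intro power_mono) auto
  then show ?thesis using assms by (simp add: add_increasing2)
next
  case False
  then have "d ^ a * s ^ b \<le> d ^ a * d ^ b"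
    using assms by (intro mult_left_mono power_mono) auto
  then show ?thesis using assms by (simp add: pos_le_divide_eq add_increasing power_add)
qed

lemma abs_inverse_diff_le_near:
  fixes x m :: real
  assumes "0 < m" "m \<le> 2 * x"
  shows "\<bar>1 / x - 1 / m\<bar> \<le> 2 * \<bar>x - m\<bar> / m\<^sup>2"
proof -
  have "\<bar>1 / x - 1 / m\<bar> = \<bar>x - m\<bar> / (x * m)"
    using assms by (simp add: field_simps abs_div abs_minus_commute)
  also have "\<dots> \<le> \<bar>x - m\<bar> / (m / 2 * m)"
    using assms by (intro divide_left_mono mult_right_mono) auto
  finally show ?thesis by (simp add: power2_eq_square mult.commute)
qed

lemma abs_inverse_diff_le_one:
  fixes x m :: real
  assumes "1 \<le> x" "x \<le> m"
  shows "\<bar>1 / x - 1 / m\<bar> \<le> 1"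
proof -
  have "1 / m \<le> 1 / x" "1 / x \<le> 1" "0 < 1 / m"
    using assms by (auto intro: frac_le)
  then show ?thesis by linarith
qed

lemma abs_inverse_diff_power_le:
  fixes x s :: real
  assumes x: "1 \<le> x" and s: "0 < s"
  shows "\<bar>1 / x - 1 / s\<^sup>2\<bar> ^ q
    \<le> 2 ^ q / s ^ (3 * q) + (2 ^ q / s ^ (7 * q) + 16 ^ q / s ^ (8 * q)) * (x - s\<^sup>2) ^ (4 * q)"
proof -
  define d where "d = \<bar>x - s\<^sup>2\<bar>"
  have d: "d \<ge> 0" "(x - s\<^sup>2) ^ (4 * q) = d ^ (4 * q)"
    by (simp_all add: d_def power_even_abs)
  have "\<bar>1 / x - 1 / s\<^sup>2\<bar> ^ q \<le> 2 ^ q / s ^ (3 * q) + 2 ^ q / s ^ (7 * q) * d ^ (4 * q)"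
    if near: "s\<^sup>2 \<le> 2 * x"
  proof -
    have "\<bar>1 / x - 1 / s\<^sup>2\<bar> ^ q \<le> (2 * d / s ^ 4) ^ q"
      using abs_inverse_diff_le_near[OF _ near] s by (intro power_mono) (auto simp: d_def)
    also have "\<dots> = 2 ^ q * d ^ q / s ^ (4 * q)"
      by (simp add: power_divide power_mult_distrib power_mult)
    also have "\<dots> \<le> 2 ^ q * (s ^ q + d ^ (4 * q) / s ^ (3 * q)) / s ^ (4 * q)"
      using power_le_add_power_div[OF d(1) s, of q "3 * q"] s
      by (intro divide_right_mono mult_left_mono) auto
    also have "\<dots> = 2 ^ q / s ^ (3 * q) + 2 ^ q / s ^ (7 * q) * d ^ (4 * q)"
    proof -
      have "s ^ (4 * q) = s ^ q * s ^ (3 * q)" "s ^ (7 * q) = s ^ (3 * q) * s ^ (4 * q)"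
        by (simp_all flip: power_add)
      then show ?thesis
        using s by (simp add: field_simps)
    qed
    finally show ?thesis .
  qed
  moreover have "\<bar>1 / x - 1 / s\<^sup>2\<bar> ^ q \<le> 16 ^ q / s ^ (8 * q) * d ^ (4 * q)"
    if far: "\<not> s\<^sup>2 \<le> 2 * x"
  proof -
    have "\<bar>1 / x - 1 / s\<^sup>2\<bar> ^ q \<le> 1"
      using abs_inverse_diff_le_one[of x "s\<^sup>2"] x far by (simp add: power_le_one)
    also have "1 \<le> (2 * d / s\<^sup>2) ^ (4 * q)"
      using far x s by (intro one_le_power) (auto simp: d_def)
    also have "\<dots> = 16 ^ q / s ^ (8 * q) * d ^ (4 * q)"
      by (simp add: power_divide power_mult_distrib power_mult)
    finally show ?thesis .
  qed
  moreover have "0 \<le> 2 ^ q / s ^ (3 * q) + 2 ^ q / s ^ (7 * q) * d ^ (4 * q)"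
    "0 \<le> 16 ^ q / s ^ (8 * q) * d ^ (4 * q)"
    using s d by simp_all
  ultimately show ?thesis
    unfolding d(2) distrib_right by (cases "s\<^sup>2 \<le> 2 * x") linarith+
qed

lemma square_powr_neg_half:
  fixes s :: real
  assumes "0 < s"
  shows "(s\<^sup>2) powr (- real k / 2) = 1 / s ^ k"
proof -
  have "s\<^sup>2 = s powr 2"
    using assms by (simp add: powr_numeral)
  then have "(s\<^sup>2) powr (- real k / 2) = s powr (- real k)"
    by (simp add: powr_powr)
  also have "\<dots> = 1 / s ^ k"
    using assms by (simp add: powr_minus_divide powr_realpow)
  finally show ?thesis .
qed

definition binomial_central_moment :: "nat \<Rightarrow> nat \<Rightarrow> real \<Rightarrow> real" where
  "binomial_central_moment j n p =
     measure_pmf.expectation (binomial_pmf n p) (\<lambda>k. (real k - real n * p) ^ j)"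

definition bernoulli_central_moment :: "nat \<Rightarrow> real \<Rightarrow> real" where
  "bernoulli_central_moment r p = p * (1 - p) ^ r + (1 - p) * (- p) ^ r"

lemma bernoulli_central_moment_0 [simp]: "bernoulli_central_moment 0 p = 1"
  and bernoulli_central_moment_Suc_0 [simp]: "bernoulli_central_moment (Suc 0) p = 0"
  by (simp_all add: bernoulli_central_moment_def algebra_simps)

lemma binomial_central_moment_no_trials [simp]:
  "p \<in> {0..1} \<Longrightarrow> binomial_central_moment j 0 p = 0 ^ j"
  by (simp add: binomial_central_moment_def binomial_pmf_0)

lemma abs_bernoulli_central_moment_le:
  assumes p: "p \<in> {0..1}" and r: "r \<ge> 1"
  shows "\<bar>bernoulli_central_moment r p\<bar> \<le> 2 * p"
proof -
  have "\<bar>bernoulli_central_moment r p\<bar> \<le> p * (1 - p) ^ r + (1 - p) * p ^ r"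
    unfolding bernoulli_central_moment_def
    using p by (auto intro: order.trans[OF abs_triangle_ineq] simp: abs_mult power_abs)
  also have "\<dots> \<le> p * 1 + 1 * p"
    using p r
    by (intro add_mono mult_mono power_le_one) (auto intro: power_decreasing[of 1, simplified])
  finally show ?thesis by simp
qed

lemma binomial_central_moment_Suc:
  assumes p: "p \<in> {0..1}"
  shows "binomial_central_moment j (Suc n) p =
    (\<Sum>i\<le>j. real (j choose i) * binomial_central_moment i n p * bernoulli_central_moment (j - i) p)"
proof -
  have fin: "finite (set_pmf (binomial_pmf n p))"
    using p by (simp add: set_pmf_binomial_eq)
  let ?E = "measure_pmf.expectation (binomial_pmf n p)"
  have "binomial_central_moment j (Suc n) p =
      p * ?E (\<lambda>k. ((real k - real n * p) + (1 - p)) ^ j)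
    + (1 - p) * ?E (\<lambda>k. ((real k - real n * p) + (- p)) ^ j)"
    unfolding binomial_central_moment_def binomial_pmf_Suc[OF p] map_pmf_def
    by (subst pmf_expectation_bind[where A = UNIV])
       (use p fin in \<open>auto simp: UNIV_bool map_pmf_def[symmetric] algebra_simps\<close>)
  also have "\<dots> = (\<Sum>i\<le>j. real (j choose i) * binomial_central_moment i n p
                              * bernoulli_central_moment (j - i) p)"
    unfolding binomial_ring binomial_central_moment_def bernoulli_central_moment_def
    using p by (simp add: integral_sum integral_mult_right_zero sum_distrib_left
        sum.distrib[symmetric] algebra_simps)
  finally show ?thesis .
qed

lemma abs_binomial_central_moment_Suc_diff_le:
  assumes p: "p \<in> {0..1}"
  shows "\<bar>binomial_central_moment j (Suc n) p - binomial_central_moment j n p\<bar>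
    \<le> 2 * p * (\<Sum>i<j - 1. real (j choose i) * \<bar>binomial_central_moment i n p\<bar>)"
proof (cases j)
  case 0
  then show ?thesis by (simp add: binomial_central_moment_def)
next
  case (Suc m)
  define T where
    "T i = real (j choose i) * binomial_central_moment i n p * bernoulli_central_moment (j - i) p"
    for i
  have "binomial_central_moment j (Suc n) p - binomial_central_moment j n p = (\<Sum>i<m. T i)"
    unfolding binomial_central_moment_Suc[OF p] T_def[symmetric]
    using Suc by (simp add: lessThan_Suc_atMost[symmetric] T_def)
  also have "\<bar>\<dots>\<bar> \<le> (\<Sum>i<m. real (j choose i) * \<bar>binomial_central_moment i n p\<bar> * (2 * p))"
    unfolding T_def using Suc p
    by (intro order.trans[OF sum_abs] sum_mono)
       (auto simp: abs_mult intro!: mult_left_mono abs_bernoulli_central_moment_le)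
  finally show ?thesis
    using Suc by (simp add: sum_distrib_left algebra_simps)
qed

lemma abs_binomial_central_moment_Suc_diff_le_power:
  assumes p: "p \<in> {0..1}" and "n \<le> N"
    and B: "\<And>i. i < j - 1 \<Longrightarrow>
      \<bar>binomial_central_moment i n p\<bar> \<le> B i * (1 + real n * p) ^ (i div 2)"
  shows "\<bar>binomial_central_moment j (Suc n) p - binomial_central_moment j n p\<bar>
    \<le> p * (2 * (\<Sum>i<j - 1. real (j choose i) * \<bar>B i\<bar>)) * (1 + real N * p) ^ (j div 2 - 1)"
proof -
  have "\<bar>binomial_central_moment i n p\<bar> \<le> \<bar>B i\<bar> * (1 + real N * p) ^ (j div 2 - 1)"
    if "i < j - 1" for i
  proof -
    have "B i * (1 + real n * p) ^ (i div 2) \<le> \<bar>B i\<bar> * (1 + real N * p) ^ (j div 2 - 1)"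
      using p \<open>n \<le> N\<close> that
      by (intro mult_mono abs_ge_self order.trans[OF power_mono power_increasing])
         (auto intro: mult_right_mono)
    with B[OF that] show ?thesis by linarith
  qed
  then have "\<bar>binomial_central_moment j (Suc n) p - binomial_central_moment j n p\<bar>
      \<le> 2 * p * (\<Sum>i<j - 1. real (j choose i) * (\<bar>B i\<bar> * (1 + real N * p) ^ (j div 2 - 1)))"
    using p by (intro order.trans[OF abs_binomial_central_moment_Suc_diff_le[OF p]]
        mult_left_mono sum_mono) auto
  then show ?thesis
    by (simp add: sum_distrib_left sum_distrib_right algebra_simps)
qed

lemma binomial_central_moment_bound:
  "\<exists>C>0. \<forall>n p. p \<in> {0..1} \<longrightarrow>
     \<bar>binomial_central_moment j n p\<bar> \<le> C * (1 + real n * p) ^ (j div 2)"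
proof (induction j rule: less_induct)
  case (less j)
  then obtain C where C: "\<And>i n p. i < j \<Longrightarrow> p \<in> {0..1} \<Longrightarrow>
      \<bar>binomial_central_moment i n p\<bar> \<le> C i * (1 + real n * p) ^ (i div 2)"
    by metis
  define K where "K = 2 * (\<Sum>i<j - 1. real (j choose i) * \<bar>C i\<bar>)"
  have K: "K \<ge> 0" "j div 2 = 0 \<Longrightarrow> K = 0"
    unfolding K_def by (auto intro: sum_nonneg)
  show ?case
  proof (intro exI[of _ "1 + K"] conjI allI impI)
    show "1 + K > 0" using K by simp
  next
    fix n p assume p: "(p::real) \<in> {0..1}"
    define x where "x = 1 + real n * p"
    have step: "\<bar>binomial_central_moment j (Suc m) p - binomial_central_moment j m p\<bar>
        \<le> p * K * x ^ (j div 2 - 1)" if "m < n" for m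
      unfolding K_def x_def using p that C
      by (intro abs_binomial_central_moment_Suc_diff_le_power) auto
    then have "\<bar>binomial_central_moment j n p\<bar> \<le> 1 + K * (real n * p * x ^ (j div 2 - 1))"
      using abs_le_abs_0_add_increments[of n "\<lambda>m. binomial_central_moment j m p", OF step] p
      by (simp add: power_0_left algebra_simps split: if_splits)
    also have "\<dots> \<le> (1 + K) * x ^ (j div 2)"
    proof (cases "j div 2 = 0")
      case False
      then have "real n * p * x ^ (j div 2 - 1) \<le> x ^ (j div 2)"
        unfolding x_def using p by (intro mult_power_pred_le) auto
      moreover have "1 \<le> x ^ (j div 2)"
        unfolding x_def using p by (intro one_le_power) auto
      ultimately show ?thesis
        using K by (simp add: distrib_right mult_left_mono add_mono)
    qed (use K in simp)
    finally show "\<bar>binomial_central_moment j n p\<bar> \<le> (1 + K) * (1 + real n * p) ^ (j div 2)"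
      unfolding x_def .
  qed
qed

lemma binomial_central_moment_bound_large_mean:
  assumes c: "c > 0"
  shows "\<exists>C>0. \<forall>n p. p \<in> {0..1} \<longrightarrow> c \<le> real n * p \<longrightarrow>
     \<bar>binomial_central_moment j n p\<bar> \<le> C * (real n * p) ^ (j div 2)"
proof -
  obtain C where C: "C > 0" "\<And>n p. p \<in> {0..1} \<Longrightarrow>
      \<bar>binomial_central_moment j n p\<bar> \<le> C * (1 + real n * p) ^ (j div 2)"
    using binomial_central_moment_bound by blast
  show ?thesis
  proof (intro exI[of _ "C * (1 + 1 / c) ^ (j div 2)"] conjI allI impI)
    show "C * (1 + 1 / c) ^ (j div 2) > 0"
      using C c by (intro mult_pos_pos zero_less_power add_pos_pos) auto
  next
    fix n p assume p: "(p::real) \<in> {0..1}" and mu: "c \<le> real n * p"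
    have "1 + real n * p \<le> (1 + 1 / c) * (real n * p)"
      using c mu by (simp add: field_simps)
    then have "(1 + real n * p) ^ (j div 2) \<le> (1 + 1 / c) ^ (j div 2) * (real n * p) ^ (j div 2)"
      using p by (auto intro: order.trans[OF power_mono] simp: power_mult_distrib)
    then show "\<bar>binomial_central_moment j n p\<bar> \<le> C * (1 + 1 / c) ^ (j div 2) * (real n * p) ^ (j div 2)"
      using C(2)[OF p, of n] C(1) by (auto simp: mult.assoc intro: order.trans mult_left_mono)
  qed
qed

lemma binomial_expectation_inverse_deviation_le:
  assumes p: "p \<in> {0..1}" and s: "0 < s" "s\<^sup>2 = real n * p"
  shows "measure_pmf.expectation (binomial_pmf n p)
           (\<lambda>k. if k > 0 then (1 / real k - 1 / (real n * p)) ^ q else 0)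
    \<le> 2 ^ q / s ^ (3 * q) + (2 ^ q / s ^ (7 * q) + 16 ^ q / s ^ (8 * q))
          * binomial_central_moment (4 * q) n p"
proof -
  define a where "a = 2 ^ q / s ^ (7 * q) + 16 ^ q / s ^ (8 * q)"
  have fin: "finite (set_pmf (binomial_pmf n p))"
    using p by (simp add: set_pmf_binomial_eq)
  have "measure_pmf.expectation (binomial_pmf n p)
           (\<lambda>k. if k > 0 then (1 / real k - 1 / (real n * p)) ^ q else 0)
    \<le> measure_pmf.expectation (binomial_pmf n p)
           (\<lambda>k. 2 ^ q / s ^ (3 * q) + a * (real k - real n * p) ^ (4 * q))"
  proof (intro integral_mono integrable_measure_pmf_finite[OF fin])
    fix k :: nat
    have "0 \<le> 2 ^ q / s ^ (3 * q) + a * (real k - real n * p) ^ (4 * q)"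
      using s by (simp add: a_def zero_le_even_power)
    moreover have "(1 / real k - 1 / (real n * p)) ^ q
        \<le> 2 ^ q / s ^ (3 * q) + a * (real k - real n * p) ^ (4 * q)" if "k > 0"
      using abs_inverse_diff_power_le[of "real k" s q] that s
      by (auto simp: a_def power_abs intro: order.trans[OF abs_ge_self])
    ultimately show "(if k > 0 then (1 / real k - 1 / (real n * p)) ^ q else 0)
        \<le> 2 ^ q / s ^ (3 * q) + a * (real k - real n * p) ^ (4 * q)"
      by (cases "k = 0") auto
  qed
  also have "\<dots> = 2 ^ q / s ^ (3 * q) + a * binomial_central_moment (4 * q) n p"
    using fin by (simp add: binomial_central_moment_def integrable_measure_pmf_finite)
  finally show ?thesis unfolding a_def .
qed

lemma binomial_expectation_inverse_deviation_bound:
  assumes p: "p \<in> {0..1}" and s: "0 < s" "s\<^sup>2 = real n * p" and r: "0 < r" "r \<le> s"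
    and C: "0 \<le> C" "binomial_central_moment (4 * q) n p \<le> C * s ^ (4 * q)"
  shows "measure_pmf.expectation (binomial_pmf n p)
           (\<lambda>k. if k > 0 then (1 / real k - 1 / (real n * p)) ^ q else 0)
    \<le> (2 ^ q + (2 ^ q + 16 ^ q / r ^ q) * C) / s ^ (3 * q)"
proof -
  have "measure_pmf.expectation (binomial_pmf n p)
           (\<lambda>k. if k > 0 then (1 / real k - 1 / (real n * p)) ^ q else 0)
    \<le> 2 ^ q / s ^ (3 * q) + (2 ^ q / s ^ (7 * q) + 16 ^ q / s ^ (8 * q)) * (C * s ^ (4 * q))"
    using s(1) C(2)
    by (intro order.trans[OF binomial_expectation_inverse_deviation_le[OF p s]]
        add_left_mono mult_left_mono) auto
  also have "\<dots> = (2 ^ q + (2 ^ q + 16 ^ q / s ^ q) * C) / s ^ (3 * q)"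
  proof -
    have "s ^ (7 * q) = s ^ (4 * q) * s ^ (3 * q)" "s ^ (8 * q) = s ^ (4 * q) * (s ^ q * s ^ (3 * q))"
      by (simp_all flip: power_add)
    then show ?thesis using s by (simp add: field_simps)
  qed
  also have "\<dots> \<le> (2 ^ q + (2 ^ q + 16 ^ q / r ^ q) * C) / s ^ (3 * q)"
    using s r C
    by (intro divide_right_mono add_left_mono mult_right_mono divide_left_mono power_mono) auto
  finally show ?thesis .
qed

theorem lemma1:
  fixes q :: nat and c :: real
  assumes "q > 1" and "c > 0"
  shows "\<exists>C > 0. \<forall>(n::nat) (p::real). 0 < p \<longrightarrow> p < 1 \<longrightarrow> real n * p \<ge> c \<longrightarrow>
           measure_pmf.expectation (binomial_pmf n p)
             (\<lambda>k. if k > 0 then (1 / real k - 1 / (real n * p)) ^ q else 0)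
           \<le> C * (real n * p) powr (- 3 * real q / 2)"
proof -
  obtain C where C: "C > 0" "\<And>n p. p \<in> {0..1} \<Longrightarrow> c \<le> real n * p \<Longrightarrow>
      \<bar>binomial_central_moment (4 * q) n p\<bar> \<le> C * (real n * p) ^ (2 * q)"
    using binomial_central_moment_bound_large_mean[OF \<open>c > 0\<close>, of "4 * q"] by auto
  define D where "D = 2 ^ q + (2 ^ q + 16 ^ q / sqrt c ^ q) * C"
  show ?thesis
  proof (intro exI[of _ D] conjI allI impI)
    show "D > 0"
      using C \<open>c > 0\<close> by (simp add: D_def add_pos_nonneg)
  next
    fix n p assume p: "0 < p" "p < 1" and mu: "c \<le> real n * p"
    define s where "s = sqrt (real n * p)"
    have s: "0 < s" "s\<^sup>2 = real n * p" "sqrt c \<le> s"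
      using p mu \<open>c > 0\<close> by (auto simp: s_def)
    have "binomial_central_moment (4 * q) n p \<le> C * s ^ (4 * q)"
      using C(2)[of p n] p mu by (simp add: s(2)[symmetric] flip: power_mult)
    then have "measure_pmf.expectation (binomial_pmf n p)
        (\<lambda>k. if k > 0 then (1 / real k - 1 / (real n * p)) ^ q else 0) \<le> D / s ^ (3 * q)"
      unfolding D_def using p s C(1) \<open>c > 0\<close>
      by (intro binomial_expectation_inverse_deviation_bound) auto
    also have "\<dots> = D * (real n * p) powr (- 3 * real q / 2)"
      using square_powr_neg_half[OF s(1), of "3 * q"] by (simp add: s(2))
    finally show "measure_pmf.expectation (binomial_pmf n p)
        (\<lambda>k. if k > 0 then (1 / real k - 1 / (real n * p)) ^ q else 0)
      \<le> D * (real n * p) powr (- 3 * real q / 2)" .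
  qed
qed

end
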